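(* Let $q$ be a prime power, $Q\in\mathbb{P}^2(\mathbb{F}_q)$, and $L_1,\dots,L_{q+1}$ the $\mathbb{F}_q$-lines through $Q$. Then for all sufficiently large $d$, \[ \mu_d(\mathcal{A}_0(Q))\le\frac{1}{1-q^{-2}}\prod_{i=1}^{q+1}\mu_d\big(R_{\mathrm{homog}}\setminus\mathcal{T}_{L_i,Q}\big), \] and for each $1\le j\le q+1$, \[ \mu_d(\mathcal{A}_{L_j}(Q))\le\mu_d(\mathcal{T}_{L_j,Q})\prod_{i\ne j}\mu_d\big(R_{\mathrm{homog}}\setminus\mathcal{T}_{L_i,Q}\big). \] Consequently, both inequalities also hold with $\mu_d$ replaced by $\mu$.
   Context: Let $R=\mathbb{F}_q[x,y,z]$, $R_d$ the homogeneous polynomials of degree $d$ (including $0$), $R_{\mathrm{homog}}=\bigcup_{d\ge1}R_d$, $\mu_d(\mathcal{A})=\#(\mathcal{A}\cap R_d)/\#R_d$, $\mu(\mathcal{A})=\lim_d\mu_d(\mathcal{A})$. $\mathcal{S}_Q$ is the set of $f\in R_{\mathrm{homog}}$ with $\{f=0\}$ singular at $Q$. For an $\mathbb{F}_q$-line $L\ni Q$, $\mathcal{T}_{L,Q}$ is the set of $f\in R_{\mathrm{homog}}$ whose restriction to $L$ vanishes to order at least $2$ at $Q$ ("$\{f=0\}$ tangent to $L$ at $Q$", including the singular case). Define $\mathcal{A}_0(Q)=R_{\mathrm{homog}}\setminus\bigcup_{i=1}^{q+1}\mathcal{T}_{L_i,Q}$ and, for an $\mathbb{F}_q$-line $L\ni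 Q$, $\mathcal{A}_L(Q)=\mathcal{T}_{L,Q}\setminus\mathcal{S}_Q$. *)

theory Defs
  imports "HOL-Computational_Algebra.Polynomial" Complex_Main
begin

text \<open>Polynomials in F_q[x,y,z] are represented by coefficient functions on exponent
  triples (i,j,k) (monomial x^i y^j z^k). The finite field F_q is a type 'a::{finite,field};
  q = CARD('a). Points of P^2(F_q) are represented by nonzero triples.\<close>

type_synonym 'a coeffs = "nat \<times> nat \<times> nat \<Rightarrow> 'a"

definition mdeg :: "nat \<times> nat \<times> nat \<Rightarrow> nat" where
  "mdeg m = (case m of (i,j,k) \<Rightarrow> i + j + k)"

definition Rd :: "nat \<Rightarrow> ('a::zero) coeffs set" where
  "Rd d = {f. \<forall>m. f m \<noteq> 0 \<longrightarrow> mdeg m = d}"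

definition Rhomog :: "('a::zero) coeffs set" where
  "Rhomog = (\<Union>d\<in>{1..}. Rd d)"

definition mu_d :: "nat \<Rightarrow> ('a::{finite,field}) coeffs set \<Rightarrow> real" where
  "mu_d d A = real (card (A \<inter> Rd d)) / real (card (Rd d :: 'a coeffs set))"

definition mu :: "('a::{finite,field}) coeffs set \<Rightarrow> real" where
  "mu A = lim (\<lambda>d. mu_d d A)"

definition peval :: "('a::field) coeffs \<Rightarrow> 'a \<times> 'a \<times> 'a \<Rightarrow> 'a" where
  "peval f P = (case P of (a,b,c) \<Rightarrow>
     (\<Sum>m\<in>{m. f m \<noteq> 0}. case m of (i,j,k) \<Rightarrow> f m * a^i * b^j * c^k))"

definition dx :: "('a::field) coeffs \<Rightarrow> 'a coeffs" where
  "dx f = (\<lambda>(i,j,k). of_nat (i+1) * f (i+1,j,k))"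
definition dy :: "('a::field) coeffs \<Rightarrow> 'a coeffs" where
  "dy f = (\<lambda>(i,j,k). of_nat (j+1) * f (i,j+1,k))"
definition dz :: "('a::field) coeffs \<Rightarrow> 'a coeffs" where
  "dz f = (\<lambda>(i,j,k). of_nat (k+1) * f (i,j,k+1))"

definition Sing :: "('a::field \<times> 'a \<times> 'a) \<Rightarrow> 'a coeffs set" where
  "Sing Q = {f \<in> Rhomog. peval f Q = 0 \<and> peval (dx f) Q = 0 \<and> peval (dy f) Q = 0
                          \<and> peval (dz f) Q = 0}"

text \<open>Projective points and F_q-lines through Q. A line is represented as the set of
  nonzero vectors in the 2-dimensional subspace spanned by Q and P.\<close>
definition proportional :: "('a::field \<times> 'a \<times> 'a) \<Rightarrow> 'a \<times> 'a \<times> 'a \<Rightarrow> bool" where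
  "proportional P Q = (\<exists>a. P = (a * fst Q, a * fst (snd Q), a * snd (snd Q)))"

definition lin2 :: "'a::field \<Rightarrow> 'a \<times> 'a \<times> 'a \<Rightarrow> 'a \<Rightarrow> 'a \<times> 'a \<times> 'a \<Rightarrow> 'a \<times> 'a \<times> 'a" where
  "lin2 a Q b P = (a * fst Q + b * fst P, a * fst (snd Q) + b * fst (snd P),
                   a * snd (snd Q) + b * snd (snd P))"

definition line :: "('a::field \<times> 'a \<times> 'a) \<Rightarrow> 'a \<times> 'a \<times> 'a \<Rightarrow> ('a \<times> 'a \<times> 'a) set" where
  "line Q P = {v. v \<noteq> (0,0,0) \<and> (\<exists>a b. v = lin2 a Q b P)}"

definition Lines :: "('a::field \<times> 'a \<times> 'a) \<Rightarrow> ('a \<times> 'a \<times> 'a) set set" where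
  "Lines Q = {line Q P | P. \<not> proportional P Q}"

text \<open>Restriction of f to the line through Q and P, in the affine coordinate u with
  Q at u = 0: the univariate polynomial u \<mapsto> f(Q + u P).\<close>
definition restr :: "('a::field) coeffs \<Rightarrow> 'a \<times> 'a \<times> 'a \<Rightarrow> 'a \<times> 'a \<times> 'a \<Rightarrow> 'a poly" where
  "restr f Q P = (case Q of (a,b,c) \<Rightarrow> case P of (a',b',c') \<Rightarrow>
     (\<Sum>m\<in>{m. f m \<noteq> 0}. case m of (i,j,k) \<Rightarrow>
        smult (f m) ([:a,a':]^i * [:b,b':]^j * [:c,c':]^k)))"

text \<open>T_{L,Q}: restriction of f to L vanishes to order at least 2 at Q.\<close>
definition Tang :: "('a::field \<times> 'a \<times> 'a) set \<Rightarrow> 'a \<times> 'a \<times> 'a \<Rightarrow> 'a coeffs set" where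
  "Tang L Q = {f \<in> Rhomog. \<exists>P\<in>L. \<not> proportional P Q \<and>
                 coeff (restr f Q P) 0 = 0 \<and> coeff (restr f Q P) 1 = 0}"

definition A0 :: "('a::field \<times> 'a \<times> 'a) \<Rightarrow> 'a coeffs set" where
  "A0 Q = Rhomog - (\<Union>L\<in>Lines Q. Tang L Q)"

definition AL :: "('a::field \<times> 'a \<times> 'a) set \<Rightarrow> 'a \<times> 'a \<times> 'a \<Rightarrow> 'a coeffs set" where
  "AL L Q = Tang L Q - Sing Q"

end

theory Submission
  imports Defs "HOL-Library.Function_Algebras" "HOL-Library.Product_Plus"
begin

(* For d >= 1 the jet map f |-> (f(Q), grad f(Q)) is additive on R_d, and by Euler's identity
   grad f(Q) . Q = d f(Q) its image is the q^3-element set {(a, g). g . Q = d a}, every value being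
   taken equally often. The sets in question are preimages of sets of jets: f lies in A_0(Q) iff
   f(Q) <> 0, f is tangent to the line through Q and P iff f(Q) = 0 and grad f(Q) . P = 0, and f is
   singular at Q iff its jet vanishes. Hence mu_d(A_0(Q)) = 1 - 1/q, mu_d(T_L) = 1/q^2 and
   mu_d(A_L(Q)) = 1/q^2 - 1/q^3 for every d >= 1, so the limits mu exist and take the same values.
   Both inequalities then follow from Bernoulli's inequality 1 - 1/q <= (1 - 1/q^2)^q together with
   the fact that at most q + 1 lines pass through Q. *)

section \<open>Counting with additive maps\<close>

lemma card_fibre_additive:
  fixes \<phi> :: "'b::ab_group_add \<Rightarrow> 'c::ab_group_add"
  assumes add_closed: "\<And>x y. x \<in> V \<Longrightarrow> y \<in> V \<Longrightarrow> x + y \<in> V"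
    and diff_closed: "\<And>x y. x \<in> V \<Longrightarrow> y \<in> V \<Longrightarrow> x - y \<in> V"
    and additive: "\<And>x y. x \<in> V \<Longrightarrow> y \<in> V \<Longrightarrow> \<phi> (x + y) = \<phi> x + \<phi> y"
    and "x0 \<in> V" "x1 \<in> V"
  shows "card {x\<in>V. \<phi> x = \<phi> x1} = card {x\<in>V. \<phi> x = \<phi> x0}"
proof -
  have \<phi>_diff: "\<phi> (x - y) = \<phi> x - \<phi> y" if "x \<in> V" "y \<in> V" for x y
    using additive[of "x - y" y] diff_closed that by (simp add: eq_diff_eq)
  have "bij_betw (\<lambda>x. x - x1 + x0) {x\<in>V. \<phi> x = \<phi> x1} {x\<in>V. \<phi> x = \<phi> x0}"
    by (rule bij_betw_byWitness[where f' = "\<lambda>x. x - x0 + x1"])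
      (use assms \<phi>_diff in auto)
  then show ?thesis by (rule bij_betw_same_card)
qed

lemma card_preimage_additive:
  fixes \<phi> :: "'b::ab_group_add \<Rightarrow> 'c::ab_group_add"
  assumes "finite V"
    and add_closed: "\<And>x y. x \<in> V \<Longrightarrow> y \<in> V \<Longrightarrow> x + y \<in> V"
    and diff_closed: "\<And>x y. x \<in> V \<Longrightarrow> y \<in> V \<Longrightarrow> x - y \<in> V"
    and additive: "\<And>x y. x \<in> V \<Longrightarrow> y \<in> V \<Longrightarrow> \<phi> (x + y) = \<phi> x + \<phi> y"
    and "x0 \<in> V"
  shows "card {x\<in>V. \<phi> x \<in> S} = card (S \<inter> \<phi> ` V) * card {x\<in>V. \<phi> x = \<phi> x0}"
proof -
  have "card {x\<in>V. \<phi> x \<in> S} = card (\<Union>w\<in>S \<inter> \<phi> ` V. {x\<in>V. \<phi> x = w})"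
    by (rule arg_cong[where f = card]) auto
  also have "\<dots> = (\<Sum>w\<in>S \<inter> \<phi> ` V. card {x\<in>V. \<phi> x = w})"
    by (rule card_UN_disjoint) (use \<open>finite V\<close> in auto)
  also have "\<dots> = (\<Sum>w\<in>S \<inter> \<phi> ` V. card {x\<in>V. \<phi> x = \<phi> x0})"
    using card_fibre_additive[OF add_closed diff_closed additive \<open>x0 \<in> V\<close>] by (intro sum.cong) auto
  finally show ?thesis by simp
qed

lemma density_preimage_additive:
  fixes \<phi> :: "'b::ab_group_add \<Rightarrow> 'c::ab_group_add"
  assumes "finite V" "V \<noteq> {}"
    and add_closed: "\<And>x y. x \<in> V \<Longrightarrow> y \<in> V \<Longrightarrow> x + y \<in> V"
    and diff_closed: "\<And>x y. x \<in> V \<Longrightarrow> y \<in> V \<Longrightarrow> x - y \<in> V"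
    and additive: "\<And>x y. x \<in> V \<Longrightarrow> y \<in> V \<Longrightarrow> \<phi> (x + y) = \<phi> x + \<phi> y"
  shows "real (card {x\<in>V. \<phi> x \<in> S}) / real (card V)
           = real (card (S \<inter> \<phi> ` V)) / real (card (\<phi> ` V))"
proof -
  obtain x0 where "x0 \<in> V" using \<open>V \<noteq> {}\<close> by blast
  note count = card_preimage_additive[OF \<open>finite V\<close> add_closed diff_closed additive \<open>x0 \<in> V\<close>]
  have "card {x\<in>V. \<phi> x = \<phi> x0} > 0"
    using \<open>finite V\<close> \<open>x0 \<in> V\<close> by (auto simp: card_gt_0_iff)
  then show ?thesis using count[of S] count[of UNIV] by simp
qed

section \<open>Homogeneous polynomials, derivatives and restrictions to lines\<close>

definition Mon :: "nat \<Rightarrow> (nat \<times> nat \<times> nat) set" where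
  "Mon d = {m. mdeg m = d}"

lemma finite_Mon: "finite (Mon d)"
proof (rule finite_subset)
  show "Mon d \<subseteq> {..d} \<times> {..d} \<times> {..d}" by (auto simp: Mon_def mdeg_def)
qed auto

lemma Rd_support_subset: "f \<in> Rd d \<Longrightarrow> {m. f m \<noteq> 0} \<subseteq> Mon d"
  by (auto simp: Rd_def Mon_def)

lemma finite_Rd: "finite (Rd d :: 'a::{finite,zero} coeffs set)"
proof (rule finite_subset)
  show "Rd d \<subseteq> {f. \<forall>m. (m \<in> Mon d \<longrightarrow> f m \<in> (UNIV :: 'a set)) \<and> (m \<notin> Mon d \<longrightarrow> f m = 0)}"
    by (auto simp: Rd_def Mon_def)
qed (intro finite_set_of_finite_funs finite_Mon finite_UNIV)

lemma RdI: "(\<And>m. f m \<noteq> 0 \<Longrightarrow> mdeg m = d) \<Longrightarrow> f \<in> Rd d"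
  by (simp add: Rd_def)

lemma RdD: "f \<in> Rd d \<Longrightarrow> f m \<noteq> 0 \<Longrightarrow> mdeg m = d"
  unfolding Rd_def by blast

lemma zero_in_Rd: "0 \<in> Rd d"
  by (simp add: Rd_def)

lemma add_in_Rd:
  fixes f g :: "'a::monoid_add coeffs"
  assumes "f \<in> Rd d" "g \<in> Rd d"
  shows "f + g \<in> Rd d"
proof (rule RdI)
  fix m assume "(f + g) m \<noteq> 0"
  then have "f m \<noteq> 0 \<or> g m \<noteq> 0" by auto
  then show "mdeg m = d" using RdD assms by blast
qed

lemma diff_in_Rd:
  fixes f g :: "'a::group_add coeffs"
  assumes "f \<in> Rd d" "g \<in> Rd d"
  shows "f - g \<in> Rd d"
proof (rule RdI)
  fix m assume "(f - g) m \<noteq> 0"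
  then have "f m \<noteq> 0 \<or> g m \<noteq> 0" by auto
  then show "mdeg m = d" using RdD assms by blast
qed

lemma Rd_subset_Rhomog: "d \<ge> 1 \<Longrightarrow> Rd d \<subseteq> Rhomog"
  by (auto simp: Rhomog_def)

lemma peval_eq_sum:
  assumes "finite M" "{m. f m \<noteq> 0} \<subseteq> M"
  shows "peval f (a,b,c) = (\<Sum>(i,j,k)\<in>M. f (i,j,k) * a^i * b^j * c^k)"
  unfolding peval_def using assms
  by (auto simp: split_def intro: sum.mono_neutral_left)

lemma peval_Rd:
  "f \<in> Rd d \<Longrightarrow> peval f (a,b,c) = (\<Sum>(i,j,k)\<in>Mon d. f (i,j,k) * a^i * b^j * c^k)"
  by (rule peval_eq_sum[OF finite_Mon Rd_support_subset])

lemma peval_add: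
  assumes "f \<in> Rd d" "g \<in> Rd d"
  shows "peval (f + g) P = peval f P + peval g P"
  using add_in_Rd[OF assms] assms
  by (cases P) (simp add: peval_Rd split_def sum.distrib[symmetric] algebra_simps)

lemma peval_single:
  "peval (\<lambda>m. if m = (i,j,k) then e else 0) (a,b,c) = e * a^i * b^j * c^k"
  by (subst peval_eq_sum[of "{(i,j,k)}"]) auto

lemma dx_Rd: "f \<in> Rd d \<Longrightarrow> dx f \<in> Rd (d - 1)"
proof (rule RdI)
  fix m :: "nat \<times> nat \<times> nat"
  obtain i j k where [simp]: "m = (i,j,k)" by (cases m)
  assume "f \<in> Rd d" "dx f m \<noteq> 0"
  then show "mdeg m = d - 1" using RdD[of f d "(Suc i, j, k)"] by (auto simp: dx_def mdeg_def)
qed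

lemma dy_Rd: "f \<in> Rd d \<Longrightarrow> dy f \<in> Rd (d - 1)"
proof (rule RdI)
  fix m :: "nat \<times> nat \<times> nat"
  obtain i j k where [simp]: "m = (i,j,k)" by (cases m)
  assume "f \<in> Rd d" "dy f m \<noteq> 0"
  then show "mdeg m = d - 1" using RdD[of f d "(i, Suc j, k)"] by (auto simp: dy_def mdeg_def)
qed

lemma dz_Rd: "f \<in> Rd d \<Longrightarrow> dz f \<in> Rd (d - 1)"
proof (rule RdI)
  fix m :: "nat \<times> nat \<times> nat"
  obtain i j k where [simp]: "m = (i,j,k)" by (cases m)
  assume "f \<in> Rd d" "dz f m \<noteq> 0"
  then show "mdeg m = d - 1" using RdD[of f d "(i, j, Suc k)"] by (auto simp: dz_def mdeg_def)
qed

definition grad :: "'a::field coeffs \<Rightarrow> 'a \<times> 'a \<times> 'a \<Rightarrow> 'a \<times> 'a \<times> 'a" where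
  "grad f Q = (peval (dx f) Q, peval (dy f) Q, peval (dz f) Q)"

definition dot :: "'a::comm_ring_1 \<times> 'a \<times> 'a \<Rightarrow> 'a \<times> 'a \<times> 'a \<Rightarrow> 'a" where
  "dot u v = fst u * fst v + fst (snd u) * fst (snd v) + snd (snd u) * snd (snd v)"

lemma sum_Mon_Suc_reindex:
  assumes "inj s" "s ` Mon n \<subseteq> Mon (Suc n)"
    and "\<And>m. m \<in> Mon (Suc n) \<Longrightarrow> h m \<noteq> 0 \<Longrightarrow> m \<in> s ` Mon n"
  shows "(\<Sum>m\<in>Mon n. h (s m)) = (\<Sum>m\<in>Mon (Suc n). h m)"
proof -
  have "(\<Sum>m\<in>Mon n. h (s m)) = (\<Sum>m\<in>s ` Mon n. h m)"
    using \<open>inj s\<close> by (simp add: sum.reindex inj_on_subset)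
  also have "\<dots> = (\<Sum>m\<in>Mon (Suc n). h m)"
    by (rule sum.mono_neutral_left[OF finite_Mon]) (use assms in blast)+
  finally show ?thesis .
qed

lemma peval_dx:
  assumes "f \<in> Rd (Suc n)"
  shows "peval (dx f) (a,b,c) = (\<Sum>(i,j,k)\<in>Mon (Suc n). of_nat i * f (i,j,k) * a^(i-1) * b^j * c^k)"
proof -
  define h where "h = (\<lambda>(i,j,k). of_nat i * f (i,j,k) * a^(i-1) * b^j * c^k)"
  define s where "s = (\<lambda>(i::nat,j::nat,k::nat). (Suc i, j, k))"
  have "peval (dx f) (a,b,c) = (\<Sum>m\<in>Mon n. h (s m))"
    using peval_Rd[OF dx_Rd[OF assms]] by (simp add: h_def s_def dx_def split_def)
  also have "\<dots> = (\<Sum>m\<in>Mon (Suc n). h m)"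
  proof (rule sum_Mon_Suc_reindex)
    fix m assume m: "m \<in> Mon (Suc n)" "h m \<noteq> 0"
    obtain i j k where [simp]: "m = (i,j,k)" by (cases m)
    have "i \<noteq> 0" using m(2) by (cases "i = 0") (simp_all add: h_def)
    then show "m \<in> s ` Mon n"
      using m by (intro image_eqI[of _ _ "(i - 1, j, k)"]) (auto simp: s_def Mon_def mdeg_def)
  qed (auto simp: s_def inj_def Mon_def mdeg_def)
  finally show ?thesis by (simp add: h_def)
qed

lemma peval_dy:
  assumes "f \<in> Rd (Suc n)"
  shows "peval (dy f) (a,b,c) = (\<Sum>(i,j,k)\<in>Mon (Suc n). of_nat j * f (i,j,k) * a^i * b^(j-1) * c^k)"
proof -
  define h where "h = (\<lambda>(i,j,k). of_nat j * f (i,j,k) * a^i * b^(j-1) * c^k)"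
  define s where "s = (\<lambda>(i::nat,j::nat,k::nat). (i, Suc j, k))"
  have "peval (dy f) (a,b,c) = (\<Sum>m\<in>Mon n. h (s m))"
    using peval_Rd[OF dy_Rd[OF assms]] by (simp add: h_def s_def dy_def split_def)
  also have "\<dots> = (\<Sum>m\<in>Mon (Suc n). h m)"
  proof (rule sum_Mon_Suc_reindex)
    fix m assume m: "m \<in> Mon (Suc n)" "h m \<noteq> 0"
    obtain i j k where [simp]: "m = (i,j,k)" by (cases m)
    have "j \<noteq> 0" using m(2) by (cases "j = 0") (simp_all add: h_def)
    then show "m \<in> s ` Mon n"
      using m by (intro image_eqI[of _ _ "(i, j - 1, k)"]) (auto simp: s_def Mon_def mdeg_def)
  qed (auto simp: s_def inj_def Mon_def mdeg_def)
  finally show ?thesis by (simp add: h_def)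
qed

lemma peval_dz:
  assumes "f \<in> Rd (Suc n)"
  shows "peval (dz f) (a,b,c) = (\<Sum>(i,j,k)\<in>Mon (Suc n). of_nat k * f (i,j,k) * a^i * b^j * c^(k-1))"
proof -
  define h where "h = (\<lambda>(i,j,k). of_nat k * f (i,j,k) * a^i * b^j * c^(k-1))"
  define s where "s = (\<lambda>(i::nat,j::nat,k::nat). (i, j, Suc k))"
  have "peval (dz f) (a,b,c) = (\<Sum>m\<in>Mon n. h (s m))"
    using peval_Rd[OF dz_Rd[OF assms]] by (simp add: h_def s_def dz_def split_def)
  also have "\<dots> = (\<Sum>m\<in>Mon (Suc n). h m)"
  proof (rule sum_Mon_Suc_reindex)
    fix m assume m: "m \<in> Mon (Suc n)" "h m \<noteq> 0"
    obtain i j k where [simp]: "m = (i,j,k)" by (cases m)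
    have "k \<noteq> 0" using m(2) by (cases "k = 0") (simp_all add: h_def)
    then show "m \<in> s ` Mon n"
      using m by (intro image_eqI[of _ _ "(i, j, k - 1)"]) (auto simp: s_def Mon_def mdeg_def)
  qed (auto simp: s_def inj_def Mon_def mdeg_def)
  finally show ?thesis by (simp add: h_def)
qed

lemma euler_identity:
  assumes "f \<in> Rd (Suc n)"
  shows "dot (grad f Q) Q = of_nat (Suc n) * peval f Q"
proof -
  obtain a b c where Q: "Q = (a,b,c)" by (cases Q)
  have "dot (grad f Q) Q = (\<Sum>(i,j,k)\<in>Mon (Suc n). of_nat i * f (i,j,k) * a^(i-1) * b^j * c^k * a
      + of_nat j * f (i,j,k) * a^i * b^(j-1) * c^k * b + of_nat k * f (i,j,k) * a^i * b^j * c^(k-1) * c)"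
    by (simp add: Q dot_def grad_def peval_dx[OF assms] peval_dy[OF assms] peval_dz[OF assms]
        sum_distrib_right sum.distrib split_def)
  also have "\<dots> = (\<Sum>(i,j,k)\<in>Mon (Suc n). of_nat (i + j + k) * (f (i,j,k) * a^i * b^j * c^k))"
  proof (rule sum.cong)
    fix m :: "nat \<times> nat \<times> nat"
    obtain i j k where [simp]: "m = (i,j,k)" by (cases m)
    show "(case m of (i,j,k) \<Rightarrow> of_nat i * f (i,j,k) * a^(i-1) * b^j * c^k * a
      + of_nat j * f (i,j,k) * a^i * b^(j-1) * c^k * b + of_nat k * f (i,j,k) * a^i * b^j * c^(k-1) * c)
      = (case m of (i,j,k) \<Rightarrow> of_nat (i + j + k) * (f (i,j,k) * a^i * b^j * c^k))"
      by (cases i; cases j; cases k) (simp_all add: algebra_simps)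
  qed simp
  also have "\<dots> = of_nat (Suc n) * peval f Q"
    by (simp add: Q peval_Rd[OF assms] sum_distrib_left Mon_def mdeg_def split_def del: of_nat_add)
  finally show ?thesis .
qed

lemma coeff_linear_power:
  fixes a b :: "'a::comm_ring_1"
  shows "coeff ([:a,b:]^i) 0 = a^i" and "coeff ([:a,b:]^i) 1 = of_nat i * a^(i-1) * b"
proof -
  show "coeff ([:a,b:]^i) 0 = a^i" by (simp add: coeff_0_power)
  show "coeff ([:a,b:]^i) 1 = of_nat i * a^(i-1) * b"
  proof (induction i)
    case (Suc i)
    then show ?case by (cases i) (simp_all add: coeff_mult numeral_2_eq_2 coeff_0_power algebra_simps)
  qed simp
qed

lemma restr_Rd:
  assumes "f \<in> Rd d"
  shows "restr f (a,b,c) (a',b',c') =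
    (\<Sum>(i,j,k)\<in>Mon d. smult (f (i,j,k)) ([:a,a':]^i * [:b,b':]^j * [:c,c':]^k))"
  unfolding restr_def using Rd_support_subset[OF assms]
  by (auto simp: split_def intro: sum.mono_neutral_left finite_Mon)

lemma restr_coeff_0:
  assumes "f \<in> Rd d"
  shows "coeff (restr f Q P) 0 = peval f Q"
  by (cases Q; cases P) (simp add: restr_Rd[OF assms] peval_Rd[OF assms] coeff_sum coeff_mult_0
      coeff_linear_power split_def mult.assoc)

lemma restr_coeff_1:
  assumes "f \<in> Rd (Suc n)"
  shows "coeff (restr f Q P) 1 = dot (grad f Q) P"
proof -
  obtain a b c where Q: "Q = (a,b,c)" by (cases Q)
  obtain a' b' c' where P: "P = (a',b',c')" by (cases P)
  have coeff_1_mult: "coeff (p * r) 1 = coeff p 0 * coeff r 1 + coeff p 1 * coeff r 0" for p r :: "'a poly"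
    by (simp add: coeff_mult numeral_2_eq_2)
  have triple: "coeff ([:a,a':]^i * [:b,b':]^j * [:c,c':]^k) 1 = a' * (of_nat i * a^(i-1) * b^j * c^k)
      + b' * (of_nat j * a^i * b^(j-1) * c^k) + c' * (of_nat k * a^i * b^j * c^(k-1))" for i j k
    by (simp only: coeff_1_mult coeff_mult_0 coeff_linear_power) (simp add: algebra_simps)
  have "coeff (restr f Q P) 1 = (\<Sum>(i,j,k)\<in>Mon (Suc n). f (i,j,k) * (a' * (of_nat i * a^(i-1) * b^j * c^k)
      + b' * (of_nat j * a^i * b^(j-1) * c^k) + c' * (of_nat k * a^i * b^j * c^(k-1))))"
    unfolding Q P restr_Rd[OF assms] coeff_sum
  proof (rule sum.cong)
    fix m :: "nat \<times> nat \<times> nat"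
    obtain i j k where [simp]: "m = (i,j,k)" by (cases m)
    show "coeff (case m of (i,j,k) \<Rightarrow> smult (f (i,j,k)) ([:a,a':]^i * [:b,b':]^j * [:c,c':]^k)) 1
      = (case m of (i,j,k) \<Rightarrow> f (i,j,k) * (a' * (of_nat i * a^(i-1) * b^j * c^k)
          + b' * (of_nat j * a^i * b^(j-1) * c^k) + c' * (of_nat k * a^i * b^j * c^(k-1))))"
      by (simp only: \<open>m = (i,j,k)\<close> prod.case coeff_smult triple)
  qed simp
  also have "\<dots> = dot (grad f Q) P"
    by (simp add: Q P dot_def grad_def peval_dx[OF assms] peval_dy[OF assms] peval_dz[OF assms]
        sum_distrib_left sum.distrib split_def algebra_simps)
  finally show ?thesis .
qed

section \<open>Vectors in F_q^3 and lines through a point\<close>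

definition cross :: "'a::comm_ring_1 \<times> 'a \<times> 'a \<Rightarrow> 'a \<times> 'a \<times> 'a \<Rightarrow> 'a \<times> 'a \<times> 'a" where
  "cross u v = (fst (snd u) * snd (snd v) - snd (snd u) * fst (snd v),
                snd (snd u) * fst v - fst u * snd (snd v),
                fst u * fst (snd v) - fst (snd u) * fst v)"

definition vscale :: "'a::times \<Rightarrow> 'a \<times> 'a \<times> 'a \<Rightarrow> 'a \<times> 'a \<times> 'a" where
  "vscale t u = (t * fst u, t * fst (snd u), t * snd (snd u))"

lemma proportional_iff_vscale: "proportional P Q \<longleftrightarrow> (\<exists>t. P = vscale t Q)"
  by (simp add: proportional_def vscale_def)

lemma dot_add_left: "dot (u + v) w = dot u w + dot v w"
  by (simp add: dot_def algebra_simps)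

lemma dot_commute: "dot u v = dot v u"
  by (simp add: dot_def algebra_simps)

lemma dot_vscale: "dot (vscale t u) v = t * dot u v"
  by (simp add: vscale_def dot_def algebra_simps)

lemma dot_lin2: "dot g (lin2 a Q b P) = a * dot g Q + b * dot g P"
  by (simp add: lin2_def dot_def algebra_simps)

lemma dot_cross_left: "dot (cross Q P) Q = 0"
  by (simp add: cross_def dot_def algebra_simps)

lemma dot_cross_right: "dot (cross Q P) P = 0"
  by (simp add: cross_def dot_def algebra_simps)

lemma cross_cross: "cross g (cross Q P) = vscale (dot g P) Q - vscale (dot g Q) P"
  by (simp add: cross_def vscale_def dot_def algebra_simps)

lemma cross_eq_0_imp_proportional:
  fixes u v :: "'a::field \<times> 'a \<times> 'a"
  assumes "u \<noteq> (0,0,0)" "cross u v = (0,0,0)"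
  shows "proportional v u"
proof -
  obtain u1 u2 u3 where u: "u = (u1,u2,u3)" by (cases u)
  obtain v1 v2 v3 where v: "v = (v1,v2,v3)" by (cases v)
  have e: "u2 * v3 = u3 * v2" "u3 * v1 = u1 * v3" "u1 * v2 = u2 * v1"
    using assms(2) by (auto simp: u v cross_def)
  consider "u1 \<noteq> 0" | "u1 = 0" "u2 \<noteq> 0" | "u1 = 0" "u2 = 0" "u3 \<noteq> 0"
    using assms(1) u by blast
  then show ?thesis
  proof cases
    case 1
    then show ?thesis using e by (auto simp: proportional_def u v field_simps intro!: exI[of _ "v1 / u1"])
  next
    case 2
    then show ?thesis using e by (auto simp: proportional_def u v field_simps intro!: exI[of _ "v2 / u2"])
  next
    case 3
    then show ?thesis using e by (auto simp: proportional_def u v field_simps intro!: exI[of _ "v3 / u3"])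
  qed
qed

lemma proportional_iff_cross:
  fixes P Q :: "'a::field \<times> 'a \<times> 'a"
  assumes "Q \<noteq> (0,0,0)"
  shows "proportional P Q \<longleftrightarrow> cross Q P = (0,0,0)"
proof
  show "proportional P Q \<Longrightarrow> cross Q P = (0,0,0)"
    by (auto simp: proportional_def cross_def algebra_simps)
qed (rule cross_eq_0_imp_proportional[OF assms])

lemma common_normals_eq:
  fixes P Q :: "'a::field \<times> 'a \<times> 'a"
  assumes Q: "Q \<noteq> (0,0,0)" and P: "\<not> proportional P Q"
  shows "{g. dot g Q = 0 \<and> dot g P = 0} = range (\<lambda>t. vscale t (cross Q P))"
proof (intro equalityI subsetI)
  fix g assume "g \<in> {g. dot g Q = 0 \<and> dot g P = 0}"
  then have "cross g (cross Q P) = (0,0,0)" by (simp add: cross_cross vscale_def zero_prod_def)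
  then have "cross (cross Q P) g = (0,0,0)" by (simp add: cross_def algebra_simps)
  moreover have "cross Q P \<noteq> (0,0,0)" using P proportional_iff_cross[OF Q] by simp
  ultimately have "proportional g (cross Q P)" by (intro cross_eq_0_imp_proportional)
  then show "g \<in> range (\<lambda>t. vscale t (cross Q P))" by (auto simp: proportional_iff_vscale)
qed (auto simp: dot_vscale dot_cross_left dot_cross_right)

lemma card_UNIV_triple: "card (UNIV :: ('a::finite \<times> 'a \<times> 'a) set) = card (UNIV :: 'a set) ^ 3"
  by (simp flip: UNIV_Times_UNIV add: card_cartesian_product power3_eq_cube)

lemma card_common_normals:
  fixes P Q :: "'a::{finite,field} \<times> 'a \<times> 'a"
  assumes Q: "Q \<noteq> (0,0,0)" and P: "\<not> proportional P Q"
  shows "card {g. dot g Q = 0 \<and> dot g P = 0} = card (UNIV :: 'a set)"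
proof -
  have "cross Q P \<noteq> (0,0,0)" using P proportional_iff_cross[OF Q] by simp
  then have "inj (\<lambda>t. vscale t (cross Q P))"
    by (cases "cross Q P") (auto simp: inj_def vscale_def)
  then show ?thesis by (simp add: common_normals_eq[OF Q P] card_image)
qed

lemma exists_dot_eq:
  fixes Q :: "'a::field \<times> 'a \<times> 'a"
  assumes "Q \<noteq> (0,0,0)"
  shows "\<exists>g. dot g Q = c"
proof -
  obtain x y z where Q: "Q = (x,y,z)" by (cases Q)
  consider "x \<noteq> 0" | "y \<noteq> 0" | "z \<noteq> 0" using assms Q by blast
  then show ?thesis
  proof cases
    case 1 then show ?thesis by (intro exI[of _ "(c/x,0,0)"]) (simp add: Q dot_def)
  next
    case 2 then show ?thesis by (intro exI[of _ "(0,c/y,0)"]) (simp add: Q dot_def)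
  next
    case 3 then show ?thesis by (intro exI[of _ "(0,0,c/z)"]) (simp add: Q dot_def)
  qed
qed

lemma card_dot_eq:
  fixes Q :: "'a::{finite,field} \<times> 'a \<times> 'a"
  assumes "Q \<noteq> (0,0,0)"
  shows "card {g. dot g Q = c} = card (UNIV :: 'a set) ^ 2"
proof -
  let ?K = "card {g. dot g Q = dot 0 Q}"
  have surj: "range (\<lambda>g. dot g Q) = UNIV" using exists_dot_eq[OF assms] by (metis surjI)
  have count: "card {g\<in>UNIV. dot g Q \<in> S} = card S * ?K" for S
    using card_preimage_additive[of UNIV "\<lambda>g. dot g Q" 0 S] by (simp add: surj dot_add_left)
  have "card (UNIV :: 'a set) ^ 3 = card (UNIV :: 'a set) * ?K"
    using count[of UNIV] by (simp add: card_UNIV_triple)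
  then have "?K = card (UNIV :: 'a set) ^ 2" by (simp add: power3_eq_cube power2_eq_square)
  then show ?thesis using count[of "{c}"] by simp
qed

lemma card_proportional:
  fixes Q :: "'a::{finite,field} \<times> 'a \<times> 'a"
  assumes "Q \<noteq> (0,0,0)"
  shows "card {P. proportional P Q} = card (UNIV :: 'a set)"
proof -
  have "{P. proportional P Q} = range (\<lambda>t. vscale t Q)" by (auto simp: proportional_iff_vscale)
  moreover have "inj (\<lambda>t. vscale t Q)" using assms by (cases Q) (auto simp: inj_def vscale_def)
  ultimately show ?thesis by (simp add: card_image)
qed

lemma card_field_ge_2: "card (UNIV :: 'a::{finite,field} set) \<ge> 2"
proof -
  have "card {0, 1::'a} \<le> card (UNIV :: 'a set)" by (rule card_mono) auto
  then show ?thesis by simp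
qed

lemma exists_nonproportional_orthogonal:
  fixes Q :: "'a::{finite,field} \<times> 'a \<times> 'a"
  assumes "Q \<noteq> (0,0,0)"
  shows "\<exists>P. \<not> proportional P Q \<and> dot g P = 0"
proof -
  let ?q = "card (UNIV :: 'a set)"
  have "?q ^ 2 \<le> card {P. dot g P = 0}"
  proof (cases "g = (0,0,0)")
    case True
    have "?q ^ 2 \<le> ?q ^ 3" using card_field_ge_2[where 'a='a] by (intro power_increasing) auto
    then show ?thesis using True by (simp add: dot_def card_UNIV_triple)
  next
    case False
    then show ?thesis using card_dot_eq[OF False, of 0] by (simp add: dot_commute)
  qed
  moreover have "?q < ?q ^ 2" using card_field_ge_2[where 'a='a] by (simp add: power2_eq_square)
  moreover have "card {P. dot g P = 0} \<le> ?q" if "{P. dot g P = 0} \<subseteq> {P. proportional P Q}"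
    using card_mono[OF finite that] card_proportional[OF assms] by simp
  ultimately show ?thesis by force
qed

lemma lin2_diff: "lin2 a Q b P - lin2 a' Q b' P = lin2 (a - a') Q (b - b') P"
  by (simp add: lin2_def algebra_simps)

lemma lin2_eq_0_imp:
  fixes P Q :: "'a::field \<times> 'a \<times> 'a"
  assumes "Q \<noteq> (0,0,0)" "\<not> proportional P Q" "lin2 a Q b P = (0,0,0)"
  shows "a = 0 \<and> b = 0"
proof -
  have "b = 0"
  proof (rule ccontr)
    assume "b \<noteq> 0"
    then have "P = vscale (- a / b) Q"
      using assms(3) by (cases P; cases Q) (simp add: lin2_def vscale_def field_simps eq_neg_iff_add_eq_0)
    then show False using assms(2) by (auto simp: proportional_iff_vscale)
  qed
  then show ?thesis using assms(1,3) by (cases Q) (auto simp: lin2_def)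
qed

lemma line_lin2:
  fixes P Q :: "'a::field \<times> 'a \<times> 'a"
  assumes "b \<noteq> 0"
  shows "line Q (lin2 a Q b P) = line Q P"
proof -
  have to_P: "lin2 u Q w (lin2 a Q b P) = lin2 (u + w * a) Q (w * b) P" for u w
    by (simp add: lin2_def algebra_simps)
  have from_P: "lin2 u Q w P = lin2 (u - w / b * a) Q (w / b) (lin2 a Q b P)" for u w
    using assms by (simp add: lin2_def field_simps)
  have "(\<exists>u w. v = lin2 u Q w (lin2 a Q b P)) \<longleftrightarrow> (\<exists>u w. v = lin2 u Q w P)" for v
  proof
    assume "\<exists>u w. v = lin2 u Q w (lin2 a Q b P)"
    then show "\<exists>u w. v = lin2 u Q w P" unfolding to_P by blast
  next
    assume "\<exists>u w. v = lin2 u Q w P"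
    then obtain u w where "v = lin2 u Q w P" by blast
    then have "v = lin2 (u - w / b * a) Q (w / b) (lin2 a Q b P)" using from_P[of u w] by simp
    then show "\<exists>u w. v = lin2 u Q w (lin2 a Q b P)" by blast
  qed
  then show ?thesis unfolding line_def by blast
qed

lemma mem_line_nonproportional:
  fixes P Q :: "'a::field \<times> 'a \<times> 'a"
  assumes "v \<in> line Q P" "\<not> proportional v Q"
  shows "\<exists>a b. b \<noteq> 0 \<and> v = lin2 a Q b P"
proof -
  obtain a b where v: "v = lin2 a Q b P" using assms(1) by (auto simp: line_def)
  moreover have "b \<noteq> 0"
  proof
    assume "b = 0"
    then have "v = vscale a Q" by (simp add: v lin2_def vscale_def)
    then show False using assms(2) by (auto simp: proportional_iff_vscale)
  qed
  ultimately show ?thesis by blast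
qed

lemma self_in_line:
  fixes P Q :: "'a::field \<times> 'a \<times> 'a"
  assumes "\<not> proportional P Q"
  shows "P \<in> line Q P"
proof -
  have "P \<noteq> (0,0,0)" using assms by (auto simp: proportional_def)
  moreover have "P = lin2 0 Q 1 P" by (simp add: lin2_def)
  ultimately show ?thesis unfolding line_def by blast
qed

lemma line_nonproportional_disjoint:
  fixes P P' Q :: "'a::field \<times> 'a \<times> 'a"
  assumes "line Q P \<noteq> line Q P'"
  shows "(line Q P - {v. proportional v Q}) \<inter> (line Q P' - {v. proportional v Q}) = {}"
proof -
  have "line Q v = line Q P" if "v \<in> line Q P" "\<not> proportional v Q" for v P
    using mem_line_nonproportional[OF that] line_lin2 by blast
  then show ?thesis using assms by blast
qed

lemma card_line_nonproportional:
  fixes P Q :: "'a::{finite,field} \<times> 'a \<times> 'a"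
  assumes Q: "Q \<noteq> (0,0,0)" and P: "\<not> proportional P Q"
  shows "card (UNIV :: 'a set) * (card (UNIV :: 'a set) - 1) \<le> card (line Q P - {v. proportional v Q})"
proof -
  let ?h = "\<lambda>(a, b). lin2 a Q b P"
  have inj: "inj_on ?h (UNIV \<times> (UNIV - {0}))"
  proof (rule inj_onI)
    fix x y :: "'a \<times> 'a" assume "?h x = ?h y"
    have "lin2 (fst x - fst y) Q (snd x - snd y) P = ?h x - ?h y" by (simp add: lin2_diff split_def)
    also have "\<dots> = (0,0,0)" using \<open>?h x = ?h y\<close> by (simp add: zero_prod_def)
    finally have "fst x - fst y = 0 \<and> snd x - snd y = 0" by (rule lin2_eq_0_imp[OF Q P])
    then show "x = y" by (simp add: prod_eq_iff)
  qed
  have image: "?h ` (UNIV \<times> (UNIV - {0})) \<subseteq> line Q P - {v. proportional v Q}"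
  proof (rule image_subsetI)
    fix x :: "'a \<times> 'a" assume "x \<in> UNIV \<times> (UNIV - {0})"
    then obtain a b where x: "x = (a, b)" "b \<noteq> 0" by auto
    have "lin2 a Q b P \<noteq> (0,0,0)" using lin2_eq_0_imp[OF Q P] \<open>b \<noteq> 0\<close> by blast
    moreover have "\<not> proportional (lin2 a Q b P) Q"
    proof
      assume "proportional (lin2 a Q b P) Q"
      then obtain t where "lin2 a Q b P = vscale t Q" by (auto simp: proportional_iff_vscale)
      then have "lin2 (a - t) Q b P = (0,0,0)"
        by (cases P; cases Q) (simp add: lin2_def vscale_def algebra_simps)
      then show False using lin2_eq_0_imp[OF Q P] \<open>b \<noteq> 0\<close> by blast
    qed
    ultimately show "?h x \<in> line Q P - {v. proportional v Q}"
      by (auto simp: x line_def)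
  qed
  show ?thesis
    using card_inj_on_le[OF inj image] by (simp add: card_cartesian_product card_Diff_singleton)
qed

lemma card_Lines_le:
  fixes Q :: "'a::{finite,field} \<times> 'a \<times> 'a"
  assumes Q: "Q \<noteq> (0,0,0)"
  shows "card (Lines Q) \<le> card (UNIV :: 'a set) + 1"
proof -
  let ?q = "card (UNIV :: 'a set)"
  let ?S = "{v. proportional v Q}"
  have lower: "?q * (?q - 1) \<le> card (L - ?S)" if L: "L \<in> Lines Q" for L
  proof -
    obtain P where "L = line Q P" "\<not> proportional P Q" using L unfolding Lines_def by blast
    then show ?thesis using card_line_nonproportional[OF Q] by blast
  qed
  have disjoint: "(L - ?S) \<inter> (L' - ?S) = {}"
    if L: "L \<in> Lines Q" "L' \<in> Lines Q" "L \<noteq> L'" for L L'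
  proof -
    obtain P P' where "L = line Q P" "L' = line Q P'" using L(1,2) unfolding Lines_def by blast
    then show ?thesis using line_nonproportional_disjoint L(3) by blast
  qed
  have "card (Lines Q) * (?q * (?q - 1)) \<le> (\<Sum>L\<in>Lines Q. card (L - ?S))"
    using sum_bounded_below[of "Lines Q" "?q * (?q - 1)"] lower by simp
  also have "\<dots> = card (\<Union>L\<in>Lines Q. L - ?S)"
    by (rule card_UN_disjoint[symmetric]) (use disjoint in auto)
  also have "\<dots> \<le> card (UNIV - ?S)" by (rule card_mono) auto
  also have "\<dots> = (?q + 1) * (?q * (?q - 1))"
    using card_proportional[OF Q] card_field_ge_2[where 'a='a]
    by (simp add: card_Diff_subset card_UNIV_triple power3_eq_cube algebra_simps)
  finally show ?thesis
    by (rule mult_right_le_imp_le) (use card_field_ge_2[where 'a='a] in simp)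
qed

section \<open>First-order jets at a point\<close>

definition jet :: "'a::field \<times> 'a \<times> 'a \<Rightarrow> 'a coeffs \<Rightarrow> 'a \<times> 'a \<times> 'a \<times> 'a" where
  "jet Q f = (peval f Q, grad f Q)"

definition jet_space :: "'a::field \<times> 'a \<times> 'a \<Rightarrow> nat \<Rightarrow> ('a \<times> 'a \<times> 'a \<times> 'a) set" where
  "jet_space Q d = {(a, g). dot g Q = of_nat d * a}"

lemma jet_in_jet_space: "f \<in> Rd (Suc n) \<Longrightarrow> jet Q f \<in> jet_space Q (Suc n)"
  by (simp add: jet_def jet_space_def euler_identity)

lemma derivatives_add:
  "dx (f + g) = dx f + dx g" "dy (f + g) = dy f + dy g" "dz (f + g) = dz f + dz g"
  by (auto simp: dx_def dy_def dz_def fun_eq_iff algebra_simps)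

lemma jet_add:
  assumes "f \<in> Rd d" "g \<in> Rd d"
  shows "jet Q (f + g) = jet Q f + jet Q g"
  using peval_add[OF assms] peval_add[OF dx_Rd[OF assms(1)] dx_Rd[OF assms(2)]]
    peval_add[OF dy_Rd[OF assms(1)] dy_Rd[OF assms(2)]] peval_add[OF dz_Rd[OF assms(1)] dz_Rd[OF assms(2)]]
  by (simp add: jet_def grad_def derivatives_add)

definition rot3 :: "'b \<times> 'b \<times> 'b \<Rightarrow> 'b \<times> 'b \<times> 'b" where
  "rot3 = (\<lambda>(a, b, c). (c, a, b))"

lemma rot3_Pair [simp]: "rot3 (a, b, c) = (c, a, b)"
  by (simp add: rot3_def)

lemma rot3_rot3_rot3 [simp]: "rot3 (rot3 (rot3 u)) = u"
  by (cases u) simp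

lemma dot_rot3: "dot (rot3 u) (rot3 v) = dot u v"
  by (simp add: rot3_def dot_def split_def algebra_simps)

lemma Rd_rot3: "f \<in> Rd d \<Longrightarrow> f \<circ> rot3 \<in> Rd d"
  by (rule RdI) (auto simp: rot3_def mdeg_def split_def dest: RdD)

lemma peval_rot3: "peval (f \<circ> rot3) Q = peval f (rot3 Q)"
proof -
  obtain a b c where Q: "Q = (a,b,c)" by (cases Q)
  have "bij_betw rot3 {m. f (rot3 m) \<noteq> 0} {m. f m \<noteq> 0}"
    by (rule bij_betw_byWitness[where f' = "rot3 \<circ> rot3"]) auto
  then have "peval f (rot3 Q)
      = (\<Sum>m | f (rot3 m) \<noteq> 0. case rot3 m of (i,j,k) \<Rightarrow> f (rot3 m) * c^i * a^j * b^k)"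
    unfolding peval_def Q rot3_Pair prod.case by (rule sum.reindex_bij_betw[symmetric])
  also have "\<dots> = peval (f \<circ> rot3) Q"
    unfolding peval_def Q prod.case comp_def by (intro sum.cong) (auto simp: rot3_def split_def mult_ac)
  finally show ?thesis ..
qed

lemma derivatives_rot3:
  "dx (f \<circ> rot3) = dy f \<circ> rot3" "dy (f \<circ> rot3) = dz f \<circ> rot3" "dz (f \<circ> rot3) = dx f \<circ> rot3"
  by (auto simp: dx_def dy_def dz_def rot3_def fun_eq_iff)

lemma jet_rot3: "jet Q (f \<circ> rot3) = (peval f (rot3 Q), rot3 (rot3 (grad f (rot3 Q))))"
  by (simp add: jet_def grad_def derivatives_rot3 peval_rot3)

lemma jet_space_subset_image_first_coordinate:
  fixes x y z :: "'a::field"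
  assumes "x \<noteq> 0"
  shows "jet_space (x,y,z) (Suc n) \<subseteq> jet (x,y,z) ` Rd (Suc n)"
proof clarify
  fix a g1 g2 g3 assume "(a, g1, g2, g3) \<in> jet_space (x,y,z) (Suc n)"
  then have jet_eq: "g1 * x + g2 * y + g3 * z = of_nat (Suc n) * a" by (simp add: jet_space_def dot_def)
  \<comment> \<open>x^n times a linear form with the prescribed value and y-, z-derivatives at (x,y,z);
      the x-derivative is then forced by Euler's identity.\<close>
  define f :: "'a coeffs" where "f = (\<lambda>m.
    if m = (Suc n, 0, 0) then (a - g2 * y - g3 * z) / x ^ Suc n
    else if m = (n, 1, 0) then g2 / x ^ n else if m = (n, 0, 1) then g3 / x ^ n else 0)"
  have f: "f \<in> Rd (Suc n)" by (rule RdI) (auto simp: f_def mdeg_def split: if_splits)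
  have "peval f (x,y,z) = a"
    by (subst peval_eq_sum[of "{(Suc n,0,0), (n,1,0), (n,0,1)}"])
      (use assms in \<open>auto simp: f_def field_simps\<close>)
  moreover have "dy f = (\<lambda>m. if m = (n,0,0) then g2 / x ^ n else 0)"
    by (auto simp: dy_def f_def fun_eq_iff)
  then have "peval (dy f) (x,y,z) = g2" using assms by (simp add: peval_single)
  moreover have "dz f = (\<lambda>m. if m = (n,0,0) then g3 / x ^ n else 0)"
    by (auto simp: dz_def f_def fun_eq_iff)
  then have "peval (dz f) (x,y,z) = g3" using assms by (simp add: peval_single)
  moreover have "peval (dx f) (x,y,z) = g1"
  proof -
    have "peval (dx f) (x,y,z) * x + g2 * y + g3 * z = g1 * x + g2 * y + g3 * z"
      using euler_identity[OF f, of "(x,y,z)"] jet_eq calculation by (simp add: grad_def dot_def)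
    then show ?thesis using assms by simp
  qed
  ultimately have "jet (x,y,z) f = (a, g1, g2, g3)" by (simp add: jet_def grad_def)
  then show "(a, g1, g2, g3) \<in> jet (x,y,z) ` Rd (Suc n)" by (rule image_eqI[OF sym f])
qed

lemma jet_space_subset_image_rot3:
  assumes "jet_space (rot3 Q) d \<subseteq> jet (rot3 Q) ` Rd d"
  shows "jet_space Q d \<subseteq> jet Q ` Rd d"
proof
  fix w assume "w \<in> jet_space Q d"
  then obtain a g where w: "w = (a, g)" "dot g Q = of_nat d * a" by (auto simp: jet_space_def)
  then have "(a, rot3 g) \<in> jet_space (rot3 Q) d" by (simp add: jet_space_def dot_rot3)
  then have "(a, rot3 g) \<in> jet (rot3 Q) ` Rd d" using assms by (rule subsetD[rotated])
  then obtain f where f: "f \<in> Rd d" "peval f (rot3 Q) = a" "grad f (rot3 Q) = rot3 g"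
    by (auto simp: jet_def)
  then have "jet Q (f \<circ> rot3) = w" by (simp add: jet_rot3 w)
  then show "w \<in> jet Q ` Rd d" by (rule image_eqI[OF sym Rd_rot3[OF f(1)]])
qed

lemma jet_image:
  fixes Q :: "'a::field \<times> 'a \<times> 'a"
  assumes "Q \<noteq> (0,0,0)"
  shows "jet Q ` Rd (Suc n) = jet_space Q (Suc n)"
proof
  show "jet Q ` Rd (Suc n) \<subseteq> jet_space Q (Suc n)" using jet_in_jet_space by blast
  obtain x y z where Q: "Q = (x,y,z)" by (cases Q)
  have "x \<noteq> 0 \<or> z \<noteq> 0 \<or> y \<noteq> 0" using assms by (simp add: Q) blast
  then show "jet_space Q (Suc n) \<subseteq> jet Q ` Rd (Suc n)"
  proof (elim disjE)
    assume "x \<noteq> 0"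
    then show ?thesis unfolding Q by (rule jet_space_subset_image_first_coordinate)
  next
    assume "z \<noteq> 0"
    then have "jet_space (rot3 Q) (Suc n) \<subseteq> jet (rot3 Q) ` Rd (Suc n)"
      unfolding Q rot3_Pair by (rule jet_space_subset_image_first_coordinate)
    then show ?thesis by (rule jet_space_subset_image_rot3)
  next
    assume "y \<noteq> 0"
    then have "jet_space (rot3 (rot3 Q)) (Suc n) \<subseteq> jet (rot3 (rot3 Q)) ` Rd (Suc n)"
      unfolding Q rot3_Pair by (rule jet_space_subset_image_first_coordinate)
    then show ?thesis by (rule jet_space_subset_image_rot3[OF jet_space_subset_image_rot3])
  qed
qed

lemma card_jet_space:
  fixes Q :: "'a::{finite,field} \<times> 'a \<times> 'a"
  assumes "Q \<noteq> (0,0,0)"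
  shows "card (jet_space Q d) = card (UNIV :: 'a set) ^ 3"
proof -
  have "jet_space Q d = (SIGMA a:UNIV. {g. dot g Q = of_nat d * a})" by (auto simp: jet_space_def)
  then show ?thesis by (simp add: card_SigmaI card_dot_eq[OF assms] power2_eq_square power3_eq_cube)
qed

lemma mu_d_jet_preimage:
  fixes Q :: "'a::{finite,field} \<times> 'a \<times> 'a"
  assumes "Q \<noteq> (0,0,0)" and A: "A \<inter> Rd (Suc n) = {f \<in> Rd (Suc n). jet Q f \<in> S}"
  shows "mu_d (Suc n) A = real (card (S \<inter> jet_space Q (Suc n))) / real (card (UNIV :: 'a set)) ^ 3"
proof -
  have "mu_d (Suc n) A = real (card (S \<inter> jet Q ` Rd (Suc n))) / real (card (jet Q ` Rd (Suc n)))"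
    unfolding mu_d_def A
  proof (rule density_preimage_additive)
    show "Rd (Suc n) \<noteq> {}" using zero_in_Rd by blast
  qed (auto simp: finite_Rd add_in_Rd diff_in_Rd jet_add)
  then show ?thesis by (simp add: jet_image card_jet_space assms)
qed

section \<open>Densities\<close>

lemma mu_d_diff:
  fixes A B :: "'a::{finite,field} coeffs set"
  assumes "B \<inter> Rd d \<subseteq> A"
  shows "mu_d d (A - B) = mu_d d A - mu_d d B"
proof -
  have sub: "B \<inter> Rd d \<subseteq> A \<inter> Rd d" using assms by blast
  have "(A - B) \<inter> Rd d = (A \<inter> Rd d) - (B \<inter> Rd d)" by blast
  moreover have "card (A \<inter> Rd d - B \<inter> Rd d) = card (A \<inter> Rd d) - card (B \<inter> Rd d)"
    by (rule card_Diff_subset[OF finite_subset[OF _ finite_Rd] sub]) blast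
  moreover have "card (B \<inter> Rd d) \<le> card (A \<inter> Rd d)"
    by (rule card_mono[OF finite_subset[OF _ finite_Rd] sub]) blast
  ultimately show ?thesis by (simp add: mu_d_def of_nat_diff diff_divide_distrib)
qed

lemma mu_d_Rhomog: "d \<ge> 1 \<Longrightarrow> mu_d d (Rhomog :: 'a::{finite,field} coeffs set) = 1"
  using Rd_subset_Rhomog[of d] zero_in_Rd[of d] finite_Rd[of d, where 'a='a]
  by (auto simp: mu_d_def Int_absorb1 card_gt_0_iff)

lemma Tang_line_iff:
  assumes P: "\<not> proportional P Q" and f: "f \<in> Rd (Suc n)"
  shows "f \<in> Tang (line Q P) Q \<longleftrightarrow> peval f Q = 0 \<and> dot (grad f Q) P = 0"
proof
  assume "f \<in> Tang (line Q P) Q"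
  then obtain P' where P': "P' \<in> line Q P" "\<not> proportional P' Q"
    "coeff (restr f Q P') 0 = 0" "coeff (restr f Q P') 1 = 0" by (auto simp: Tang_def)
  have "peval f Q = 0" using P'(3) restr_coeff_0[OF f] by simp
  moreover obtain a b where "b \<noteq> 0" "P' = lin2 a Q b P" using mem_line_nonproportional[OF P'(1,2)] by blast
  moreover have "dot (grad f Q) P' = 0" using P'(4) restr_coeff_1[OF f] by simp
  \<comment> \<open>P' = a Q + b P with b \<noteq> 0, and Euler's identity makes the gradient orthogonal to Q.\<close>
  ultimately show "peval f Q = 0 \<and> dot (grad f Q) P = 0"
    using euler_identity[OF f, of Q] by (simp add: dot_lin2)
next
  assume "peval f Q = 0 \<and> dot (grad f Q) P = 0"
  then show "f \<in> Tang (line Q P) Q"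
    using self_in_line[OF P] P Rd_subset_Rhomog[of "Suc n"] f restr_coeff_0[OF f] restr_coeff_1[OF f]
    by (auto simp: Tang_def)
qed

lemma A0_iff:
  fixes Q :: "'a::{finite,field} \<times> 'a \<times> 'a"
  assumes Q: "Q \<noteq> (0,0,0)" and f: "f \<in> Rd (Suc n)"
  shows "f \<in> A0 Q \<longleftrightarrow> peval f Q \<noteq> 0"
proof
  assume "f \<in> A0 Q"
  show "peval f Q \<noteq> 0"
  proof
    assume "peval f Q = 0"
    obtain P where P: "\<not> proportional P Q" "dot (grad f Q) P = 0"
      using exists_nonproportional_orthogonal[OF Q] by blast
    then have "f \<in> Tang (line Q P) Q" using Tang_line_iff[OF P(1) f] \<open>peval f Q = 0\<close> by simp
    moreover have "line Q P \<in> Lines Q" using P(1) unfolding Lines_def by blast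
    ultimately show False using \<open>f \<in> A0 Q\<close> by (auto simp: A0_def)
  qed
next
  assume "peval f Q \<noteq> 0"
  then show "f \<in> A0 Q"
    using restr_coeff_0[OF f] Rd_subset_Rhomog[of "Suc n"] f by (auto simp: A0_def Tang_def)
qed

lemma Sing_iff: "f \<in> Rd (Suc n) \<Longrightarrow> f \<in> Sing Q \<longleftrightarrow> jet Q f = 0"
  using Rd_subset_Rhomog[of "Suc n"] by (auto simp: Sing_def jet_def grad_def zero_prod_def)

lemma mu_d_A0:
  fixes Q :: "'a::{finite,field} \<times> 'a \<times> 'a"
  assumes Q: "Q \<noteq> (0,0,0)"
  shows "mu_d (Suc n) (A0 Q) = 1 - 1 / real (card (UNIV :: 'a set))"
proof -
  let ?q = "card (UNIV :: 'a set)"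
  let ?S = "{(a, g). a \<noteq> 0}"
  have "mu_d (Suc n) (A0 Q) = real (card (?S \<inter> jet_space Q (Suc n))) / real ?q ^ 3"
    by (rule mu_d_jet_preimage[OF Q]) (auto simp: jet_def A0_iff[OF Q])
  also have "?S \<inter> jet_space Q (Suc n) = jet_space Q (Suc n) - {0} \<times> {g. dot g Q = 0}"
    by (auto simp: jet_space_def)
  also have "card \<dots> = ?q ^ 3 - ?q ^ 2"
    using card_jet_space[OF Q, of "Suc n"]
    by (subst card_Diff_subset) (auto simp: jet_space_def card_cartesian_product card_dot_eq[OF Q])
  also have "real (?q ^ 3 - ?q ^ 2) / real ?q ^ 3 = 1 - 1 / real ?q"
    using power_increasing[of 2 3 ?q] card_field_ge_2[where 'a='a]
    by (simp add: of_nat_diff field_simps power2_eq_square power3_eq_cube)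
  finally show ?thesis .
qed

lemma mu_d_Tang:
  fixes Q P :: "'a::{finite,field} \<times> 'a \<times> 'a"
  assumes Q: "Q \<noteq> (0,0,0)" and P: "\<not> proportional P Q"
  shows "mu_d (Suc n) (Tang (line Q P) Q) = 1 / real (card (UNIV :: 'a set)) ^ 2"
proof -
  have "Tang (line Q P) Q \<inter> Rd (Suc n) = {f \<in> Rd (Suc n). jet Q f \<in> {(a, g). a = 0 \<and> dot g P = 0}}"
    by (auto simp: jet_def Tang_line_iff[OF P])
  moreover have "{(a, g). a = 0 \<and> dot g P = 0} \<inter> jet_space Q (Suc n)
      = {0} \<times> {g. dot g Q = 0 \<and> dot g P = 0}"
    by (auto simp: jet_space_def)
  ultimately show ?thesis
    using card_field_ge_2[where 'a='a]
    by (simp add: mu_d_jet_preimage[OF Q] card_cartesian_product card_common_normals[OF Q P]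
        power2_eq_square power3_eq_cube)
qed

lemma mu_d_Sing:
  fixes Q :: "'a::{finite,field} \<times> 'a \<times> 'a"
  assumes Q: "Q \<noteq> (0,0,0)"
  shows "mu_d (Suc n) (Sing Q) = 1 / real (card (UNIV :: 'a set)) ^ 3"
proof -
  have "mu_d (Suc n) (Sing Q) = real (card ({0} \<inter> jet_space Q (Suc n))) / real (card (UNIV :: 'a set)) ^ 3"
    by (rule mu_d_jet_preimage[OF Q]) (auto simp: Sing_iff)
  moreover have "{0} \<inter> jet_space Q (Suc n) = {0}" by (auto simp: jet_space_def zero_prod_def dot_def)
  ultimately show ?thesis by simp
qed

definition tangency_densities :: "('a::{finite,field} coeffs set \<Rightarrow> real) \<Rightarrow> 'a \<times> 'a \<times> 'a \<Rightarrow> bool" where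
  "tangency_densities m Q \<longleftrightarrow> (let q = real (card (UNIV :: 'a set)) in
     m (A0 Q) = 1 - 1 / q \<and>
     (\<forall>L\<in>Lines Q. m (Tang L Q) = 1 / q ^ 2 \<and> m (Rhomog - Tang L Q) = 1 - 1 / q ^ 2
        \<and> m (AL L Q) = 1 / q ^ 2 - 1 / q ^ 3))"

lemma tangency_densities_mu_d:
  fixes Q :: "'a::{finite,field} \<times> 'a \<times> 'a"
  assumes Q: "Q \<noteq> (0,0,0)" and "d \<ge> 1"
  shows "tangency_densities (mu_d d) Q"
proof -
  obtain n where d: "d = Suc n" using \<open>d \<ge> 1\<close> by (cases d) auto
  have "mu_d d (Tang L Q) = 1 / real (card (UNIV :: 'a set)) ^ 2
      \<and> mu_d d (Rhomog - Tang L Q) = 1 - 1 / real (card (UNIV :: 'a set)) ^ 2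
      \<and> mu_d d (AL L Q) = 1 / real (card (UNIV :: 'a set)) ^ 2 - 1 / real (card (UNIV :: 'a set)) ^ 3"
    if "L \<in> Lines Q" for L
  proof -
    from \<open>L \<in> Lines Q\<close> obtain P where L: "L = line Q P" and P: "\<not> proportional P Q"
      unfolding Lines_def by blast
    have "Sing Q \<inter> Rd d \<subseteq> Tang L Q"
      by (auto simp: d L Sing_iff Tang_line_iff[OF P] jet_def zero_prod_def dot_def)
    moreover have "Tang L Q \<inter> Rd d \<subseteq> Rhomog" by (auto simp: Tang_def)
    ultimately show ?thesis
      by (simp add: AL_def mu_d_diff mu_d_Rhomog d L mu_d_Tang[OF Q P] mu_d_Sing[OF Q])
  qed
  then show ?thesis by (simp add: tangency_densities_def d mu_d_A0[OF Q])
qed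

lemma mu_eq_if_eventually_const:
  assumes "\<And>d. d \<ge> 1 \<Longrightarrow> mu_d d A = c"
  shows "mu A = c"
proof -
  have "(\<lambda>d. mu_d d A) \<longlonglongrightarrow> c"
    using assms by (intro tendsto_eventually) (auto simp: eventually_sequentially)
  then show ?thesis unfolding mu_def by (rule limI)
qed

lemma tangency_densities_mu:
  assumes "\<And>d. d \<ge> 1 \<Longrightarrow> tangency_densities (mu_d d) Q"
  shows "tangency_densities mu Q"
  using assms unfolding tangency_densities_def Let_def
  by (auto intro!: mu_eq_if_eventually_const)

lemma one_minus_inverse_le_power:
  assumes "n \<ge> 1"
  shows "1 - 1 / real n \<le> (1 - 1 / real n ^ 2) ^ n"
proof -
  have "1 + real n * (- 1 / real n ^ 2) \<le> (1 + - 1 / real n ^ 2) ^ n"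
    using assms by (intro Bernoulli_inequality) (simp add: field_simps)
  then show ?thesis using assms by (simp add: power2_eq_square)
qed

lemma tangency_density_bounds:
  fixes Q :: "'a::{finite,field} \<times> 'a \<times> 'a"
  assumes Q: "Q \<noteq> (0,0,0)" and dens: "tangency_densities m Q"
  shows "m (A0 Q) \<le> 1 / (1 - 1 / real (card (UNIV :: 'a set)) ^ 2) *
            (\<Prod>L\<in>Lines Q. m (Rhomog - Tang L Q))
       \<and> (\<forall>Lj\<in>Lines Q. m (AL Lj Q) \<le>
            m (Tang Lj Q) * (\<Prod>L\<in>Lines Q - {Lj}. m (Rhomog - Tang L Q)))"
proof -
  define q where "q = card (UNIV :: 'a set)"
  define x where "x = 1 - 1 / real q ^ 2"
  define N where "N = card (Lines Q)"
  have "q \<ge> 2" unfolding q_def by (rule card_field_ge_2)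
  then have x: "0 < x" "x \<le> 1" by (auto simp: x_def)
  have "N \<le> q + 1" unfolding N_def q_def by (rule card_Lines_le[OF Q])
  have base: "1 - 1 / real q \<le> x ^ q"
    unfolding x_def using \<open>q \<ge> 2\<close> by (intro one_minus_inverse_le_power) simp
  have "1 / real q ^ 2 - 1 / real q ^ 3 = 1 / real q ^ 2 * (1 - 1 / real q)"
    using \<open>q \<ge> 2\<close> by (simp add: field_simps power3_eq_cube power2_eq_square)
  then have densities: "m (A0 Q) = 1 - 1 / real q"
    "\<And>L. L \<in> Lines Q \<Longrightarrow> m (Tang L Q) = 1 / real q ^ 2 \<and> m (Rhomog - Tang L Q) = x
       \<and> m (AL L Q) = 1 / real q ^ 2 * (1 - 1 / real q)"
    using dens by (simp_all add: tangency_densities_def Let_def q_def x_def)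
  have "x ^ q \<le> x ^ N / x"
    using power_decreasing[OF \<open>N \<le> q + 1\<close> _ x(2)] x by (simp add: pos_le_divide_eq mult.commute)
  then have "m (A0 Q) \<le> 1 / x * (\<Prod>L\<in>Lines Q. m (Rhomog - Tang L Q))"
    using base densities by (simp add: N_def)
  moreover have "m (AL Lj Q) \<le> m (Tang Lj Q) * (\<Prod>L\<in>Lines Q - {Lj}. m (Rhomog - Tang L Q))"
    if "Lj \<in> Lines Q" for Lj
  proof -
    have "x ^ q \<le> x ^ (N - 1)"
      using power_decreasing[of "N - 1" q x] \<open>N \<le> q + 1\<close> x by simp
    then have "1 - 1 / real q \<le> (\<Prod>L\<in>Lines Q - {Lj}. m (Rhomog - Tang L Q))"
      using base densities that by (simp add: N_def card_Diff_singleton)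
    then show ?thesis using densities(2)[OF that] by (simp add: divide_right_mono)
  qed
  ultimately show ?thesis by (simp add: x_def q_def)
qed

theorem lemma4p6:
  fixes Q :: "'a::{finite,field} \<times> 'a \<times> 'a"
  assumes "Q \<noteq> (0,0,0)"
  shows "(\<exists>D. \<forall>d\<ge>D.
            mu_d d (A0 Q) \<le> 1 / (1 - 1 / real (card (UNIV :: 'a set)) ^ 2) *
                (\<Prod>L\<in>Lines Q. mu_d d (Rhomog - Tang L Q))
          \<and> (\<forall>Lj\<in>Lines Q. mu_d d (AL Lj Q) \<le>
                mu_d d (Tang Lj Q) * (\<Prod>L\<in>Lines Q - {Lj}. mu_d d (Rhomog - Tang L Q))))
       \<and> mu (A0 Q) \<le> 1 / (1 - 1 / real (card (UNIV :: 'a set)) ^ 2) *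
                (\<Prod>L\<in>Lines Q. mu (Rhomog - Tang L Q))
       \<and> (\<forall>Lj\<in>Lines Q. mu (AL Lj Q) \<le>
                mu (Tang Lj Q) * (\<Prod>L\<in>Lines Q - {Lj}. mu (Rhomog - Tang L Q)))"
proof -
  have dens: "tangency_densities (mu_d d) Q" if "d \<ge> 1" for d
    using tangency_densities_mu_d[OF assms that] .
  then have "tangency_densities mu Q" by (rule tangency_densities_mu)
  then show ?thesis
    using tangency_density_bounds[OF assms dens] tangency_density_bounds[OF assms] by blast
qed

end
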